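(* Let $T \in \mathbb{R}^n \otimes \mathbb{R}^n \otimes \mathbb{R}^n$ be a real tensor with complex subrank $Q_{\mathbb{C}}(T) = n$. Then $Q(T) \geq n/2$.
   Context: For $r \geq 0$ let $I_r := \sum_{j=1}^r e_j \otimes e_j \otimes e_j$. The (real) subrank of $T \in \mathbb{R}^{n_1} \otimes \mathbb{R}^{n_2} \otimes \mathbb{R}^{n_3}$ is $Q(T) := \max\{ r \mid \exists\ \mathbb{R}\text{-linear } \varphi_i : \mathbb{R}^{n_i} \to \mathbb{R}^r,\ (\varphi_1 \otimes \varphi_2 \otimes \varphi_3) T = I_r\}$. The complex subrank $Q_{\mathbb{C}}(T)$ is defined the same way but allowing $\mathbb{C}$-linear maps $\varphi_i : \mathbb{C}^{n_i} \to \mathbb{C}^r$. *)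

theory Defs
  imports Complex_Main
begin

text \<open>A tensor in K^n1 (x) K^n2 (x) K^n3 is represented by its coordinate function
  T i j k (only indices i < n1, j < n2, k < n3 are relevant).
  A K-linear map K^m \<rightarrow> K^r is represented by its r x m matrix A a i
  (a < r, i < m).\<close>

definition restricts_to_unit :: "nat \<Rightarrow> nat \<Rightarrow> nat \<Rightarrow> (nat \<Rightarrow> nat \<Rightarrow> nat \<Rightarrow> 'a::field) \<Rightarrow> nat \<Rightarrow> bool" where
  "restricts_to_unit n1 n2 n3 T r \<longleftrightarrow>
     (\<exists>A B C :: nat \<Rightarrow> nat \<Rightarrow> 'a.
        \<forall>a<r. \<forall>b<r. \<forall>c<r.
          (\<Sum>i<n1. \<Sum>j<n2. \<Sum>k<n3. A a i * B b j * C c k * T i j k)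
            = (if a = b \<and> b = c then 1 else 0))"

definition subrank :: "nat \<Rightarrow> nat \<Rightarrow> nat \<Rightarrow> (nat \<Rightarrow> nat \<Rightarrow> nat \<Rightarrow> 'a::field) \<Rightarrow> nat" where
  "subrank n1 n2 n3 T = Max {r. restricts_to_unit n1 n2 n3 T r}"

definition real_subrank :: "nat \<Rightarrow> nat \<Rightarrow> nat \<Rightarrow> (nat \<Rightarrow> nat \<Rightarrow> nat \<Rightarrow> real) \<Rightarrow> nat" where
  "real_subrank n1 n2 n3 T = subrank n1 n2 n3 T"

definition complex_subrank :: "nat \<Rightarrow> nat \<Rightarrow> nat \<Rightarrow> (nat \<Rightarrow> nat \<Rightarrow> nat \<Rightarrow> real) \<Rightarrow> nat" where
  "complex_subrank n1 n2 n3 T = subrank n1 n2 n3 (\<lambda>i j k. complex_of_real (T i j k))"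

end

theory Submission
  imports Defs "Jordan_Normal_Form.Determinant"
begin

text \<open>
  Let complex matrices \<open>A, B, C\<close> restrict the real tensor \<open>T\<close> to the unit tensor \<open>I\<^sub>n\<close>, so
  that \<open>T = \<Sum>\<^sub>a P\<^sub>a \<otimes> Q\<^sub>a \<otimes> R\<^sub>a\<close> with \<open>P, Q, R\<close> the inverses of \<open>A, B, C\<close>.
  Since \<open>T\<close> is real, the conjugate matrices restrict \<open>T\<close> to \<open>I\<^sub>n\<close> as well, so
  \<open>cnj A \<cdot> P\<close>, \<open>cnj B \<cdot> Q\<close>, \<open>cnj C \<cdot> R\<close> stabilise \<open>I\<^sub>n\<close>. Stabilisers of the unit tensor are
  monomial, with a common permutation \<open>\<pi>\<close>, and \<open>\<pi>\<close> is an involution because conjugation is.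
  For every orbit \<open>{x, \<pi> x}\<close> of \<open>\<pi>\<close> take the real parts of suitable unit multiples of the
  rows \<open>A\<^sub>x, B\<^sub>x, C\<^sub>x\<close>: their coordinates are supported on the orbit, so these real vectors
  restrict \<open>T\<close> to a diagonal tensor with nonzero diagonal, indexed by the at least \<open>n/2\<close>
  orbits, and rescaling gives a real restriction to a unit tensor of that size.
\<close>

definition right_inverse_mat :: "nat \<Rightarrow> (nat \<Rightarrow> nat \<Rightarrow> 'a::semiring_1) \<Rightarrow> (nat \<Rightarrow> nat \<Rightarrow> 'a) \<Rightarrow> bool" where
  "right_inverse_mat m F H \<longleftrightarrow> (\<forall>a<m. \<forall>b<m. (\<Sum>i<m. F a i * H i b) = (if a = b then 1 else 0))"

lemma right_inverse_mat_commute: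
  fixes F H :: "nat \<Rightarrow> nat \<Rightarrow> 'a::field"
  assumes "right_inverse_mat m F H"
  shows "right_inverse_mat m H F"
proof -
  define MF where "MF = mat m m (\<lambda>(a, i). F a i)"
  define MH where "MH = mat m m (\<lambda>(a, i). H a i)"
  have "MF * MH = 1\<^sub>m m"
    using assms by (intro eq_matI)
      (auto simp: right_inverse_mat_def MF_def MH_def scalar_prod_def lessThan_atLeast0)
  then have "MH * MF = 1\<^sub>m m"
    by (rule mat_mult_left_right_inverse[rotated 2]) (simp_all add: MF_def MH_def)
  show ?thesis
    unfolding right_inverse_mat_def
  proof (intro allI impI)
    fix a b assume "a < m" "b < m"
    with \<open>MH * MF = 1\<^sub>m m\<close> have "(MH * MF) $$ (a, b) = 1\<^sub>m m $$ (a, b)"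
      by simp
    with \<open>a < m\<close> \<open>b < m\<close> show "(\<Sum>i<m. H a i * F i b) = (if a = b then 1 else 0)"
      by (simp add: MF_def MH_def scalar_prod_def lessThan_atLeast0)
  qed
qed

definition vec_mat :: "nat \<Rightarrow> (nat \<Rightarrow> 'a::semiring_0) \<Rightarrow> (nat \<Rightarrow> nat \<Rightarrow> 'a) \<Rightarrow> nat \<Rightarrow> 'a" where
  "vec_mat n u X a = (\<Sum>i<n. u i * X i a)"

lemma vec_mat_cong: "(\<And>i. i < n \<Longrightarrow> u i = u' i) \<Longrightarrow> vec_mat n u X a = vec_mat n u' X a"
  unfolding vec_mat_def by (intro sum.cong) auto

lemma vec_mat_lincomb:
  "vec_mat n (\<lambda>i. \<Sum>a<m. f a * U a i) X b = (\<Sum>a<m. f a * vec_mat n (U a) X b)"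
  unfolding vec_mat_def
  by (simp add: sum_distrib_left sum_distrib_right mult.assoc sum.swap[of _ "{..<m}"])

lemma vec_mat_add:
  "vec_mat n (\<lambda>i. p * u i + q * v i) X a = p * vec_mat n u X a + q * vec_mat n v X a"
  unfolding vec_mat_def by (simp add: sum.distrib sum_distrib_left algebra_simps)

lemma vec_mat_right_inverse_row:
  "right_inverse_mat n U X \<Longrightarrow> x < n \<Longrightarrow> a < n \<Longrightarrow> vec_mat n (U x) X a = (if x = a then 1 else 0)"
  by (simp add: right_inverse_mat_def vec_mat_def)

lemma right_inverse_mat_expand:
  fixes U X :: "nat \<Rightarrow> nat \<Rightarrow> 'a::field"
  assumes "right_inverse_mat n U X" "i < n"
  shows "u i = (\<Sum>a<n. vec_mat n u X a * U a i)"
proof -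
  have "(\<Sum>a<n. vec_mat n u X a * U a i) = (\<Sum>i'<n. u i' * (\<Sum>a<n. X i' a * U a i))"
    unfolding vec_mat_def sum_distrib_right sum_distrib_left
    by (subst sum.swap) (simp add: mult.assoc)
  also have "\<dots> = (\<Sum>i'<n. if i' = i then u i else 0)"
    using right_inverse_mat_commute[OF assms(1)] \<open>i < n\<close>
    unfolding right_inverse_mat_def by (intro sum.cong) auto
  finally show ?thesis
    using \<open>i < n\<close> by simp
qed

lemma restricts_to_unit_le:
  fixes T :: "nat \<Rightarrow> nat \<Rightarrow> nat \<Rightarrow> 'a::field"
  assumes "restricts_to_unit n1 n2 n3 T r"
  shows "r \<le> n1"
proof (rule ccontr)
  assume "\<not> r \<le> n1"
  then have "n1 < r" by simp
  from assms obtain A B C :: "nat \<Rightarrow> nat \<Rightarrow> 'a" where unit: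
    "\<forall>a<r. \<forall>b<r. \<forall>c<r. (\<Sum>i<n1. \<Sum>j<n2. \<Sum>k<n3. A a i * B b j * C c k * T i j k)
       = (if a = b \<and> b = c then 1 else 0)"
    unfolding restricts_to_unit_def by blast
  \<comment> \<open>Padded to \<open>r \<times> r\<close>, \<open>A\<close> gets a right inverse, hence a left inverse, despite its zero column \<open>n1\<close>.\<close>
  define F where "F a i = (if i < n1 then A a i else 0)" for a i
  define H where "H i b = (if i < n1 then \<Sum>j<n2. \<Sum>k<n3. B b j * C b k * T i j k else 0)" for i b
  have "right_inverse_mat r F H"
    unfolding right_inverse_mat_def
  proof (intro allI impI)
    fix a b assume "a < r" "b < r"
    have "(\<Sum>i<r. F a i * H i b) = (\<Sum>i<n1. F a i * H i b)"
      using \<open>n1 < r\<close> by (intro sum.mono_neutral_right) (auto simp: F_def H_def)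
    also have "\<dots> = (\<Sum>i<n1. \<Sum>j<n2. \<Sum>k<n3. A a i * B b j * C b k * T i j k)"
      by (simp add: F_def H_def sum_distrib_left mult.assoc)
    finally show "(\<Sum>i<r. F a i * H i b) = (if a = b then 1 else 0)"
      using unit \<open>a < r\<close> \<open>b < r\<close> by simp
  qed
  from right_inverse_mat_commute[OF this] have "(\<Sum>i<r. H n1 i * F i n1) = 1"
    using \<open>n1 < r\<close> unfolding right_inverse_mat_def by simp
  then show False
    by (simp add: H_def)
qed

lemma finite_restricts_to_unit:
  fixes T :: "nat \<Rightarrow> nat \<Rightarrow> nat \<Rightarrow> 'a::field"
  shows "finite {r. restricts_to_unit n1 n2 n3 T r}"
  by (rule finite_subset[of _ "{..n1}"]) (auto dest: restricts_to_unit_le)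

lemma le_subrank:
  fixes T :: "nat \<Rightarrow> nat \<Rightarrow> nat \<Rightarrow> 'a::field"
  assumes "restricts_to_unit n1 n2 n3 T r"
  shows "r \<le> subrank n1 n2 n3 T"
  unfolding subrank_def using finite_restricts_to_unit assms by (intro Max_ge) auto

lemma restricts_to_unit_subrank:
  fixes T :: "nat \<Rightarrow> nat \<Rightarrow> nat \<Rightarrow> 'a::field"
  shows "restricts_to_unit n1 n2 n3 T (subrank n1 n2 n3 T)"
proof -
  have "restricts_to_unit n1 n2 n3 T 0"
    by (simp add: restricts_to_unit_def)
  then show ?thesis
    using Max_in[OF finite_restricts_to_unit] unfolding subrank_def by blast
qed

definition unit_tensor :: "nat \<Rightarrow> nat \<Rightarrow> nat \<Rightarrow> 'a::{zero, one}" where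
  "unit_tensor a b c = (if a = b \<and> b = c then 1 else 0)"

definition contract :: "nat \<Rightarrow> (nat \<Rightarrow> nat \<Rightarrow> nat \<Rightarrow> 'a::comm_semiring_1)
    \<Rightarrow> (nat \<Rightarrow> 'a) \<Rightarrow> (nat \<Rightarrow> 'a) \<Rightarrow> (nat \<Rightarrow> 'a) \<Rightarrow> 'a" where
  "contract n T u v w = (\<Sum>i<n. \<Sum>j<n. \<Sum>k<n. u i * v j * w k * T i j k)"

definition unit_restriction :: "nat \<Rightarrow> (nat \<Rightarrow> nat \<Rightarrow> nat \<Rightarrow> 'a::comm_semiring_1)
    \<Rightarrow> (nat \<Rightarrow> nat \<Rightarrow> 'a) \<Rightarrow> (nat \<Rightarrow> nat \<Rightarrow> 'a) \<Rightarrow> (nat \<Rightarrow> nat \<Rightarrow> 'a) \<Rightarrow> nat \<Rightarrow> bool" where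
  "unit_restriction n T A B C r \<longleftrightarrow>
     (\<forall>a<r. \<forall>b<r. \<forall>c<r. contract n T (A a) (B b) (C c) = unit_tensor a b c)"

lemma restricts_to_unit_iff_unit_restriction:
  "restricts_to_unit n n n T r \<longleftrightarrow> (\<exists>A B C. unit_restriction n T A B C r)"
  unfolding restricts_to_unit_def unit_restriction_def contract_def unit_tensor_def ..

lemma contract_cong:
  "(\<And>i. i < n \<Longrightarrow> u i = u' i) \<Longrightarrow> (\<And>i. i < n \<Longrightarrow> v i = v' i) \<Longrightarrow> (\<And>i. i < n \<Longrightarrow> w i = w' i)
    \<Longrightarrow> contract n T u v w = contract n T u' v' w'"
  unfolding contract_def by simp

lemma contract_lincomb:
  "contract n T (\<lambda>i. \<Sum>a<m. f a * A a i) (\<lambda>j. \<Sum>b<m. g b * B b j) (\<lambda>k. \<Sum>c<m. h c * C c k)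
     = (\<Sum>a<m. \<Sum>b<m. \<Sum>c<m. f a * g b * h c * contract n T (A a) (B b) (C c))"
proof -
  have lin1: "contract n T (\<lambda>i. \<Sum>a<m. f a * A a i) v w = (\<Sum>a<m. f a * contract n T (A a) v w)" for v w
    unfolding contract_def
    by (simp add: sum_distrib_left sum_distrib_right mult.assoc sum.swap[of _ "{..<m}"])
  have lin2: "contract n T u (\<lambda>j. \<Sum>b<m. g b * B b j) w = (\<Sum>b<m. g b * contract n T u (B b) w)" for u w
    unfolding contract_def
    by (simp add: sum_distrib_left sum_distrib_right mult.assoc mult.left_commute sum.swap[of _ "{..<m}"])
  have lin3: "contract n T u v (\<lambda>k. \<Sum>c<m. h c * C c k) = (\<Sum>c<m. h c * contract n T u v (C c))" for u v
    unfolding contract_def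
    by (simp add: sum_distrib_left sum_distrib_right mult.assoc mult.left_commute sum.swap[of _ "{..<m}"])
  show ?thesis
    unfolding lin1 lin2 lin3 by (simp add: sum_distrib_left mult.assoc)
qed

lemma contract_unit_tensor: "contract n unit_tensor u v w = (\<Sum>a<n. u a * v a * w a)"
  unfolding contract_def
proof (intro sum.cong refl)
  fix i assume "i \<in> {..<n}"
  have "(\<Sum>k<n. u i * v j * w k * unit_tensor i j k) = (if j = i then u i * v i * w i else 0)" for j
    using \<open>i \<in> {..<n}\<close>
    by (cases "j = i") (simp_all add: unit_tensor_def if_distrib[of "(*) _"] cong: if_cong)
  with \<open>i \<in> {..<n}\<close> show "(\<Sum>j<n. \<Sum>k<n. u i * v j * w k * unit_tensor i j k) = u i * v i * w i"
    by simp
qed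

lemma contract_decomposition:
  fixes T :: "nat \<Rightarrow> nat \<Rightarrow> nat \<Rightarrow> 'a::field"
  assumes "unit_restriction n T A B C n"
    and "right_inverse_mat n A P" "right_inverse_mat n B Q" "right_inverse_mat n C R"
  shows "contract n T u v w = (\<Sum>a<n. vec_mat n u P a * vec_mat n v Q a * vec_mat n w R a)"
proof -
  have "contract n T u v w = contract n T (\<lambda>i. \<Sum>a<n. vec_mat n u P a * A a i)
      (\<lambda>j. \<Sum>b<n. vec_mat n v Q b * B b j) (\<lambda>k. \<Sum>c<n. vec_mat n w R c * C c k)"
    using assms(2-4) by (intro contract_cong right_inverse_mat_expand)
  also have "\<dots> = contract n unit_tensor (vec_mat n u P) (vec_mat n v Q) (vec_mat n w R)"
    using assms(1) unfolding contract_lincomb unit_restriction_def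
    by (simp add: contract_def[of _ unit_tensor])
  finally show ?thesis
    by (simp add: contract_unit_tensor)
qed

lemma unit_restriction_right_inverses:
  fixes T :: "nat \<Rightarrow> nat \<Rightarrow> nat \<Rightarrow> 'a::field"
  assumes "unit_restriction n T A B C n"
  shows "right_inverse_mat n A (\<lambda>i a. \<Sum>j<n. \<Sum>k<n. B a j * C a k * T i j k)"
    and "right_inverse_mat n B (\<lambda>j b. \<Sum>i<n. \<Sum>k<n. A b i * C b k * T i j k)"
    and "right_inverse_mat n C (\<lambda>k c. \<Sum>i<n. \<Sum>j<n. A c i * B c j * T i j k)"
proof -
  have unit: "a < n \<Longrightarrow> b < n \<Longrightarrow> c < n \<Longrightarrow>
      contract n T (A a) (B b) (C c) = (if a = b \<and> b = c then 1 else 0)" for a b c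
    using assms by (simp add: unit_restriction_def unit_tensor_def)
  have "(\<Sum>i<n. A a i * (\<Sum>j<n. \<Sum>k<n. B b j * C b k * T i j k)) = contract n T (A a) (B b) (C b)" for a b
    by (simp add: contract_def sum_distrib_left mult_ac)
  then show "right_inverse_mat n A (\<lambda>i a. \<Sum>j<n. \<Sum>k<n. B a j * C a k * T i j k)"
    using unit by (simp add: right_inverse_mat_def)
  have "(\<Sum>j<n. B a j * (\<Sum>i<n. \<Sum>k<n. A b i * C b k * T i j k)) = contract n T (A b) (B a) (C b)" for a b
    unfolding contract_def by (subst sum.swap) (simp add: sum_distrib_left mult_ac)
  then show "right_inverse_mat n B (\<lambda>j b. \<Sum>i<n. \<Sum>k<n. A b i * C b k * T i j k)"
    using unit by (simp add: right_inverse_mat_def)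
  have "(\<Sum>k<n. C a k * (\<Sum>i<n. \<Sum>j<n. A b i * B b j * T i j k)) = contract n T (A b) (B b) (C a)" for a b
  proof -
    have "contract n T (A b) (B b) (C a) = (\<Sum>i<n. \<Sum>k<n. \<Sum>j<n. A b i * B b j * C a k * T i j k)"
      unfolding contract_def by (intro sum.cong refl sum.swap)
    also have "\<dots> = (\<Sum>k<n. \<Sum>i<n. \<Sum>j<n. A b i * B b j * C a k * T i j k)"
      by (rule sum.swap)
    finally show ?thesis
      by (simp add: sum_distrib_left mult_ac)
  qed
  then show "right_inverse_mat n C (\<lambda>k c. \<Sum>i<n. \<Sum>j<n. A c i * B c j * T i j k)"
    using unit by (simp add: right_inverse_mat_def)
qed

lemma restricts_to_unit_of_diagonal:
  fixes T :: "nat \<Rightarrow> nat \<Rightarrow> nat \<Rightarrow> 'a::field"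
  assumes "finite S"
    and diagonal: "\<And>x y z. x \<in> S \<Longrightarrow> y \<in> S \<Longrightarrow> z \<in> S \<Longrightarrow>
      contract n T (u x) (v y) (w z) \<noteq> 0 \<longleftrightarrow> x = y \<and> y = z"
  shows "restricts_to_unit n n n T (card S)"
proof -
  obtain e where e: "bij_betw e {0..<card S} S"
    using ex_bij_betw_nat_finite[OF \<open>finite S\<close>] by blast
  define u' where "u' a = (\<lambda>i. u (e a) i / contract n T (u (e a)) (v (e a)) (w (e a)))" for a
  have "contract n T (u' a) (v (e b)) (w (e c)) = unit_tensor a b c"
    if "a < card S" "b < card S" "c < card S" for a b c
  proof -
    have "e a \<in> S" "e b \<in> S" "e c \<in> S" "e a = e b \<longleftrightarrow> a = b" "e b = e c \<longleftrightarrow> b = c"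
      using e that unfolding bij_betw_def inj_on_def by auto
    moreover have "contract n T (\<lambda>i. u x i / d) v' w' = contract n T (u x) v' w' / d" for x d v' w'
      by (simp add: contract_def sum_divide_distrib)
    ultimately show ?thesis
      using diagonal[of "e a" "e b" "e c"] diagonal[of "e a" "e a" "e a"]
      by (auto simp: u'_def unit_tensor_def)
  qed
  then have "unit_restriction n T u' (\<lambda>b. v (e b)) (\<lambda>c. w (e c)) (card S)"
    by (simp add: unit_restriction_def)
  then show ?thesis
    unfolding restricts_to_unit_iff_unit_restriction by blast
qed

section \<open>The stabiliser of the unit tensor\<close>

lemma unit_restriction_unit_tensor_rotate:
  assumes "unit_restriction n unit_tensor U V W n"
  shows "unit_restriction n unit_tensor V W U n"
  using assms unfolding unit_restriction_def contract_unit_tensor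
  by (auto simp: unit_tensor_def mult_ac)

lemma unit_stabilizer_row_monomial:
  fixes U V W :: "nat \<Rightarrow> nat \<Rightarrow> 'a::field"
  assumes "unit_restriction n unit_tensor U V W n"
    and U': "right_inverse_mat n U' U" and V': "right_inverse_mat n V' V"
    and "z < n" "a < n" "b < n" "a \<noteq> b"
  shows "W z a = 0 \<or> W z b = 0"
proof -
  have unit: "(\<Sum>c<n. U x c * V y c * W z c) = (if x = y \<and> y = z then 1 else 0)"
    if "x < n" "y < n" for x y
    using assms(1) that \<open>z < n\<close> by (simp add: unit_restriction_def contract_unit_tensor unit_tensor_def)
  have key: "U' p z * V' q z = (if p = q then W z p else 0)" if "p < n" "q < n" for p q
  proof -
    have "U' p z * V' q z = contract n unit_tensor (U' p) (V' q) (\<lambda>c. if c = z then 1 else 0)"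
      using \<open>z < n\<close> by (simp add: contract_unit_tensor if_distrib[of "(*) _"] cong: if_cong)
    also have "\<dots> = (\<Sum>x<n. \<Sum>y<n. U' p x * V' q y * unit_tensor x y z)"
      using \<open>z < n\<close> unfolding contract_def
      by (simp add: if_distrib[of "\<lambda>t. t * _"] if_distrib[of "(*) _"] cong: if_cong)
    also have "\<dots> = (\<Sum>x<n. \<Sum>y<n. U' p x * V' q y * (\<Sum>c<n. U x c * V y c * W z c))"
      by (intro sum.cong refl) (simp add: unit unit_tensor_def)
    also have "\<dots> = (\<Sum>x<n. \<Sum>y<n. \<Sum>c<n. U' p x * V' q y * (U x c * V y c * W z c))"
      by (simp add: sum_distrib_left)
    also have "\<dots> = (\<Sum>x<n. \<Sum>c<n. \<Sum>y<n. U' p x * V' q y * (U x c * V y c * W z c))"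
      by (intro sum.cong refl sum.swap)
    also have "\<dots> = (\<Sum>c<n. \<Sum>x<n. \<Sum>y<n. U' p x * V' q y * (U x c * V y c * W z c))"
      by (rule sum.swap)
    also have "\<dots> = (\<Sum>c<n. (\<Sum>x<n. U' p x * U x c) * (\<Sum>y<n. V' q y * V y c) * W z c)"
      unfolding sum_product sum_distrib_right
      by (intro sum.cong refl) (simp add: mult_ac sum_distrib_left)
    also have "\<dots> = (\<Sum>c<n. (if p = c then 1 else 0) * (if q = c then 1 else 0) * W z c)"
      using U' V' that unfolding right_inverse_mat_def by (intro sum.cong) auto
    also have "\<dots> = (if p = q then W z p else 0)"
      using \<open>p < n\<close> by (simp add: if_distrib[of "\<lambda>t. t * _"] cong: if_cong)
    finally show ?thesis .
  qed
  show ?thesis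
  proof (rule ccontr)
    assume "\<not> ?thesis"
    with key[of a a] key[of b b] \<open>a < n\<close> \<open>b < n\<close> have "U' a z \<noteq> 0" "V' b z \<noteq> 0"
      by auto
    with key[of a b] \<open>a < n\<close> \<open>b < n\<close> \<open>a \<noteq> b\<close> show False
      by simp
  qed
qed

lemma unit_stabilizer_monomial:
  fixes U V W :: "nat \<Rightarrow> nat \<Rightarrow> 'a::field"
  assumes unit: "unit_restriction n unit_tensor U V W n"
    and inv: "right_inverse_mat n U' U" "right_inverse_mat n V' V" "right_inverse_mat n W' W"
    and "x < n"
  shows "\<exists>p<n. U x p * V x p * W x p = 1 \<and> (\<forall>a<n. a \<noteq> p \<longrightarrow> U x a = 0 \<and> V x a = 0 \<and> W x a = 0)"
proof -
  have diag: "(\<Sum>a<n. U x a * V x a * W x a) = 1"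
    using unit \<open>x < n\<close> by (simp add: unit_restriction_def contract_unit_tensor unit_tensor_def)
  then have "(\<Sum>a<n. U x a * V x a * W x a) \<noteq> 0"
    by simp
  then obtain p where "p < n" and p: "U x p * V x p * W x p \<noteq> 0"
    by (meson lessThan_iff sum.neutral)
  note unit' = unit_restriction_unit_tensor_rotate[OF unit]
  note unit'' = unit_restriction_unit_tensor_rotate[OF unit']
  have zero: "U x a = 0 \<and> V x a = 0 \<and> W x a = 0" if "a < n" "a \<noteq> p" for a
    using unit_stabilizer_row_monomial[OF unit inv(1,2) \<open>x < n\<close> that(1) \<open>p < n\<close> that(2)]
      unit_stabilizer_row_monomial[OF unit' inv(2,3) \<open>x < n\<close> that(1) \<open>p < n\<close> that(2)]
      unit_stabilizer_row_monomial[OF unit'' inv(3,1) \<open>x < n\<close> that(1) \<open>p < n\<close> that(2)] p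
    by auto
  have "(\<Sum>a<n. U x a * V x a * W x a) = U x p * V x p * W x p"
    using \<open>p < n\<close> zero by (subst sum.mono_neutral_right[of _ "{p}"]) auto
  with diag \<open>p < n\<close> zero show ?thesis
    by auto
qed

lemma card_involution_representatives:
  assumes "\<And>x. x < n \<Longrightarrow> f x < n" "\<And>x. x < n \<Longrightarrow> f (f x) = x"
  shows "n \<le> 2 * card {x. x < n \<and> x \<le> f x}"
proof -
  let ?S = "{x. x < n \<and> x \<le> f x}"
  have "{..<n} \<subseteq> ?S \<union> f ` ?S"
  proof
    fix x assume "x \<in> {..<n}"
    with assms show "x \<in> ?S \<union> f ` ?S"
      by (cases "x \<le> f x") (auto intro!: image_eqI[of x f "f x"])
  qed
  then have "card {..<n} \<le> card (?S \<union> f ` ?S)"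
    by (intro card_mono) auto
  then have "n \<le> card (?S \<union> f ` ?S)"
    by simp
  also have "\<dots> \<le> card ?S + card (f ` ?S)"
    by (rule card_Un_le)
  also have "\<dots> \<le> 2 * card ?S"
    using card_image_le[of ?S f] by simp
  finally show ?thesis .
qed

lemma involution_representative_unique:
  fixes f :: "'a::linorder \<Rightarrow> 'a"
  assumes "x \<le> f x" "y \<le> f y" "f (f x) = x" "f (f y) = y" "a \<in> {x, f x}" "a \<in> {y, f y}"
  shows "x = y"
proof -
  have "x = a \<or> x = f a"
    using assms(3,5) by auto
  moreover have "y = a \<or> y = f a"
    using assms(4,6) by auto
  ultimately consider "x = y" | "x = a" "y = f a" | "x = f a" "y = a"
    by blast
  then show ?thesis
    using assms(1-4) by cases (simp_all add: antisym)
qed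

section \<open>Real parts of complex rows\<close>

definition conj_quot :: "nat \<Rightarrow> (nat \<Rightarrow> nat \<Rightarrow> complex) \<Rightarrow> (nat \<Rightarrow> nat \<Rightarrow> complex) \<Rightarrow> nat \<Rightarrow> nat \<Rightarrow> complex" where
  "conj_quot n U X x a = vec_mat n (\<lambda>i. cnj (U x i)) X a"

lemma right_inverse_mat_conj_quot:
  assumes "right_inverse_mat n U X"
  shows "right_inverse_mat n (\<lambda>x a. cnj (conj_quot n U X x a)) (conj_quot n U X)"
  unfolding right_inverse_mat_def
proof (intro allI impI)
  fix x y assume "x < n" "y < n"
  have row: "U x i = (\<Sum>a<n. cnj (conj_quot n U X x a) * cnj (U a i))" if "i < n" for i
    using arg_cong[OF right_inverse_mat_expand[OF assms that, of "\<lambda>i. cnj (U x i)"], of cnj]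
    by (simp add: conj_quot_def)
  have "(\<Sum>a<n. cnj (conj_quot n U X x a) * conj_quot n U X a y)
      = vec_mat n (\<lambda>i. \<Sum>a<n. cnj (conj_quot n U X x a) * cnj (U a i)) X y"
    unfolding vec_mat_lincomb conj_quot_def ..
  also have "\<dots> = vec_mat n (U x) X y"
    by (rule vec_mat_cong) (erule row[symmetric])
  also have "\<dots> = (if x = y then 1 else 0)"
    using assms \<open>x < n\<close> \<open>y < n\<close> by (rule vec_mat_right_inverse_row)
  finally show "(\<Sum>a<n. cnj (conj_quot n U X x a) * conj_quot n U X a y) = (if x = y then 1 else 0)" .
qed

lemma of_real_Re_mult: "complex_of_real (Re (c * z)) = c / 2 * z + cnj c / 2 * cnj z"
proof -
  have "complex_of_real (Re w) = w / 2 + cnj w / 2" for w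
    using complex_add_cnj[of w] by (simp add: field_simps)
  then show ?thesis
    by (subst (1) \<open>\<And>w. _\<close>) (simp add: field_simps)
qed

lemma vec_mat_Re_row:
  assumes "right_inverse_mat n U X" "x < n" "a < n"
  shows "vec_mat n (\<lambda>i. of_real (Re (c * U x i))) X a
    = c / 2 * (if x = a then 1 else 0) + cnj c / 2 * conj_quot n U X x a"
proof -
  have "vec_mat n (\<lambda>i. of_real (Re (c * U x i))) X a
      = vec_mat n (\<lambda>i. c / 2 * U x i + cnj c / 2 * cnj (U x i)) X a"
    by (rule vec_mat_cong) (rule of_real_Re_mult)
  also have "\<dots> = c / 2 * vec_mat n (U x) X a + cnj c / 2 * conj_quot n U X x a"
    unfolding vec_mat_add conj_quot_def ..
  finally show ?thesis
    using vec_mat_right_inverse_row[OF assms] by simp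
qed

text \<open>
  The phase must be \<open>1\<close> when \<open>g = 0\<close>: for a row whose partner differs from itself the
  diagonal weight is \<open>(c\<^sup>3 + cnj c\<^sup>3) / 8\<close>, which vanishes for \<open>c = \<i>\<close>.
\<close>
definition phase :: "complex \<Rightarrow> complex" where
  "phase g = (if g = -1 then \<i> else 1)"

lemma phase_0 [simp]: "phase 0 = 1"
  by (simp add: phase_def)

lemma phase_nonzero: "phase g / 2 + cnj (phase g) / 2 * g \<noteq> 0"
  by (auto simp: phase_def field_simps add_eq_0_iff)

text \<open>
  For \<open>G = conj_quot n U X\<close>, by \<open>vec_mat_Re_row\<close> the vector \<open>re_image G x\<close> holds the
  coordinates of the real row \<open>Re (phase (G x x) * U x)\<close> in the basis of rows of \<open>U\<close>.
\<close>
definition re_image :: "(nat \<Rightarrow> nat \<Rightarrow> complex) \<Rightarrow> nat \<Rightarrow> nat \<Rightarrow> complex" where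
  "re_image G x a = phase (G x x) / 2 * (if x = a then 1 else 0) + cnj (phase (G x x)) / 2 * G x a"

lemma re_image_diagonal_nonzero:
  assumes "x < n" "p < n"
    and zero: "\<And>a. a < n \<Longrightarrow> a \<noteq> p \<Longrightarrow> GA x a = 0 \<and> GB x a = 0 \<and> GC x a = 0"
    and prod: "GA x p * GB x p * GC x p = 1"
  shows "(\<Sum>a<n. re_image GA x a * re_image GB x a * re_image GC x a) \<noteq> 0"
proof (cases "p = x")
  case True
  then have "(\<Sum>a<n. re_image GA x a * re_image GB x a * re_image GC x a)
      = re_image GA x x * re_image GB x x * re_image GC x x"
    using assms by (subst sum.mono_neutral_right[of _ "{x}"]) (auto simp: re_image_def)
  then show ?thesis
    using phase_nonzero by (simp add: re_image_def)
next
  case False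
  then have "(\<Sum>a<n. re_image GA x a * re_image GB x a * re_image GC x a)
      = (\<Sum>a\<in>{x, p}. re_image GA x a * re_image GB x a * re_image GC x a)"
    using assms by (intro sum.mono_neutral_right) (auto simp: re_image_def)
  also have "\<dots> = 1 / 8 + GA x p * GB x p * GC x p / 8"
    using False zero[of x] \<open>x < n\<close> by (simp add: re_image_def)
  also have "\<dots> = 1 / 4"
    using prod by simp
  finally show ?thesis
    by auto
qed

section \<open>Real restrictions from a complex restriction to the unit tensor\<close>

locale complex_unit_restriction =
  fixes n :: nat and T :: "nat \<Rightarrow> nat \<Rightarrow> nat \<Rightarrow> real" and A B C P Q R :: "nat \<Rightarrow> nat \<Rightarrow> complex"
  assumes unit: "unit_restriction n (\<lambda>i j k. of_real (T i j k)) A B C n"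
    and inverse_A: "right_inverse_mat n A P"
    and inverse_B: "right_inverse_mat n B Q"
    and inverse_C: "right_inverse_mat n C R"
begin

definition GA :: "nat \<Rightarrow> nat \<Rightarrow> complex" where "GA = conj_quot n A P"
definition GB :: "nat \<Rightarrow> nat \<Rightarrow> complex" where "GB = conj_quot n B Q"
definition GC :: "nat \<Rightarrow> nat \<Rightarrow> complex" where "GC = conj_quot n C R"

lemma decomposition:
  "contract n (\<lambda>i j k. of_real (T i j k)) u v w
     = (\<Sum>a<n. vec_mat n u P a * vec_mat n v Q a * vec_mat n w R a)"
  using unit inverse_A inverse_B inverse_C by (rule contract_decomposition)

lemma unit_restriction_conj_quot: "unit_restriction n unit_tensor GA GB GC n"
  unfolding unit_restriction_def
proof (intro allI impI)
  fix x y z assume "x < n" "y < n" "z < n"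
  have "contract n unit_tensor (GA x) (GB y) (GC z)
      = contract n (\<lambda>i j k. of_real (T i j k)) (\<lambda>i. cnj (A x i)) (\<lambda>i. cnj (B y i)) (\<lambda>i. cnj (C z i))"
    unfolding contract_unit_tensor decomposition GA_def GB_def GC_def conj_quot_def ..
  also have "\<dots> = cnj (contract n (\<lambda>i j k. of_real (T i j k)) (A x) (B y) (C z))"
    by (simp add: contract_def)
  finally show "contract n unit_tensor (GA x) (GB y) (GC z) = unit_tensor x y z"
    using unit \<open>x < n\<close> \<open>y < n\<close> \<open>z < n\<close> by (simp add: unit_restriction_def unit_tensor_def)
qed

definition partner :: "nat \<Rightarrow> nat" where
  "partner x = (SOME p. p < n \<and> GA x p * GB x p * GC x p = 1
     \<and> (\<forall>a<n. a \<noteq> p \<longrightarrow> GA x a = 0 \<and> GB x a = 0 \<and> GC x a = 0))"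

lemma partner:
  assumes "x < n"
  shows "partner x < n" and "GA x (partner x) * GB x (partner x) * GC x (partner x) = 1"
    and "\<And>a. a < n \<Longrightarrow> a \<noteq> partner x \<Longrightarrow> GA x a = 0 \<and> GB x a = 0 \<and> GC x a = 0"
proof -
  have "\<exists>p<n. GA x p * GB x p * GC x p = 1 \<and> (\<forall>a<n. a \<noteq> p \<longrightarrow> GA x a = 0 \<and> GB x a = 0 \<and> GC x a = 0)"
    using unit_restriction_conj_quot right_inverse_mat_conj_quot[OF inverse_A]
      right_inverse_mat_conj_quot[OF inverse_B] right_inverse_mat_conj_quot[OF inverse_C] assms
    unfolding GA_def GB_def GC_def by (rule unit_stabilizer_monomial)
  then have "partner x < n \<and> GA x (partner x) * GB x (partner x) * GC x (partner x) = 1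
     \<and> (\<forall>a<n. a \<noteq> partner x \<longrightarrow> GA x a = 0 \<and> GB x a = 0 \<and> GC x a = 0)"
    unfolding partner_def by (rule someI_ex)
  then show "partner x < n" "GA x (partner x) * GB x (partner x) * GC x (partner x) = 1"
    and "\<And>a. a < n \<Longrightarrow> a \<noteq> partner x \<Longrightarrow> GA x a = 0 \<and> GB x a = 0 \<and> GC x a = 0"
    by auto
qed

lemma partner_partner:
  assumes "x < n"
  shows "partner (partner x) = x"
proof -
  have "(\<Sum>y<n. cnj (GA x y) * GA y x) = 1"
    using right_inverse_mat_conj_quot[OF inverse_A] assms
    unfolding right_inverse_mat_def GA_def by simp
  moreover have "(\<Sum>y<n. cnj (GA x y) * GA y x) = cnj (GA x (partner x)) * GA (partner x) x"
    using partner[OF assms] by (subst sum.mono_neutral_right[of _ "{partner x}"]) auto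
  ultimately have "GA (partner x) x \<noteq> 0"
    by auto
  then have "x = partner (partner x)"
    using partner(3)[OF partner(1)[OF assms] assms] by auto
  then show ?thesis
    by simp
qed

definition representatives :: "nat set" where
  "representatives = {x. x < n \<and> x \<le> partner x}"

definition RA :: "nat \<Rightarrow> nat \<Rightarrow> real" where "RA x i = Re (phase (GA x x) * A x i)"
definition RB :: "nat \<Rightarrow> nat \<Rightarrow> real" where "RB x i = Re (phase (GB x x) * B x i)"
definition RC :: "nat \<Rightarrow> nat \<Rightarrow> real" where "RC x i = Re (phase (GC x x) * C x i)"

lemma contract_real_rows:
  assumes "x < n" "y < n" "z < n"
  shows "of_real (contract n T (RA x) (RB y) (RC z))
    = (\<Sum>a<n. re_image GA x a * re_image GB y a * re_image GC z a)"
proof -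
  have "of_real (contract n T (RA x) (RB y) (RC z)) = contract n (\<lambda>i j k. of_real (T i j k))
      (\<lambda>i. of_real (RA x i)) (\<lambda>i. of_real (RB y i)) (\<lambda>i. of_real (RC z i))"
    by (simp add: contract_def)
  also have "\<dots> = (\<Sum>a<n. re_image GA x a * re_image GB y a * re_image GC z a)"
    unfolding decomposition
  proof (intro sum.cong refl arg_cong2[where f = "(*)"])
    fix a assume "a \<in> {..<n}"
    then show "vec_mat n (\<lambda>i. of_real (RA x i)) P a = re_image GA x a"
      "vec_mat n (\<lambda>i. of_real (RB y i)) Q a = re_image GB y a"
      "vec_mat n (\<lambda>i. of_real (RC z i)) R a = re_image GC z a"
      unfolding RA_def RB_def RC_def GA_def GB_def GC_def re_image_def
      using assms by (simp_all only: lessThan_iff vec_mat_Re_row inverse_A inverse_B inverse_C)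
  qed
  finally show ?thesis .
qed

lemma contract_real_rows_nonzero_iff:
  assumes "x \<in> representatives" "y \<in> representatives" "z \<in> representatives"
  shows "contract n T (RA x) (RB y) (RC z) \<noteq> 0 \<longleftrightarrow> x = y \<and> y = z"
proof -
  have xyz: "x < n" "y < n" "z < n" and reps: "x \<le> partner x" "y \<le> partner y" "z \<le> partner z"
    using assms by (simp_all add: representatives_def)
  have "(\<Sum>a<n. re_image GA x a * re_image GB y a * re_image GC z a) \<noteq> 0 \<longleftrightarrow> x = y \<and> y = z"
  proof
    assume "(\<Sum>a<n. re_image GA x a * re_image GB y a * re_image GC z a) \<noteq> 0"
    then obtain a where "a < n" and "re_image GA x a * re_image GB y a * re_image GC z a \<noteq> 0"
      by (meson lessThan_iff sum.neutral)
    then have "a \<in> {x, partner x}" "a \<in> {y, partner y}" "a \<in> {z, partner z}"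
      using partner(3)[OF xyz(1)] partner(3)[OF xyz(2)] partner(3)[OF xyz(3)]
      by (auto simp: re_image_def split: if_splits)
    then show "x = y \<and> y = z"
      using involution_representative_unique[of x partner y a]
        involution_representative_unique[of y partner z a] reps partner_partner xyz
      by simp
  next
    assume "x = y \<and> y = z"
    moreover have "(\<Sum>a<n. re_image GA x a * re_image GB x a * re_image GC x a) \<noteq> 0"
      using partner[OF xyz(1)] by (intro re_image_diagonal_nonzero[OF xyz(1)]) auto
    ultimately show "(\<Sum>a<n. re_image GA x a * re_image GB y a * re_image GC z a) \<noteq> 0"
      by simp
  qed
  then show ?thesis
    using contract_real_rows[OF xyz] by (metis of_real_eq_0_iff)
qed

lemma restricts_to_unit_representatives: "restricts_to_unit n n n T (card representatives)"
  by (rule restricts_to_unit_of_diagonal[OF _ contract_real_rows_nonzero_iff])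
    (simp add: representatives_def)

lemma card_representatives: "n \<le> 2 * card representatives"
  unfolding representatives_def using partner(1) partner_partner
  by (rule card_involution_representatives)

end

theorem proposition2p3:
  fixes T :: "nat \<Rightarrow> nat \<Rightarrow> nat \<Rightarrow> real" and n :: nat
  assumes "complex_subrank n n n T = n"
  shows "real (real_subrank n n n T) \<ge> real n / 2"
proof -
  have "restricts_to_unit n n n (\<lambda>i j k. complex_of_real (T i j k)) n"
    using restricts_to_unit_subrank assms unfolding complex_subrank_def by metis
  then obtain A B C where unit: "unit_restriction n (\<lambda>i j k. complex_of_real (T i j k)) A B C n"
    unfolding restricts_to_unit_iff_unit_restriction by blast
  interpret complex_unit_restriction n T A B C
    "\<lambda>i a. \<Sum>j<n. \<Sum>k<n. B a j * C a k * of_real (T i j k)"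
    "\<lambda>j b. \<Sum>i<n. \<Sum>k<n. A b i * C b k * of_real (T i j k)"
    "\<lambda>k c. \<Sum>i<n. \<Sum>j<n. A c i * B c j * of_real (T i j k)"
    using unit unit_restriction_right_inverses[OF unit] by unfold_locales
  have "card representatives \<le> real_subrank n n n T"
    unfolding real_subrank_def using le_subrank[OF restricts_to_unit_representatives] .
  with card_representatives show ?thesis
    by simp
qed

end
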